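(* (1) If $A$ is a finite abelian group, then $A$ has, up to isomorphism, a unique GI-extension, namely $A\rtimes C_2$ where the generator of $C_2$ acts by $a\mapsto -a$. (2) For a finite group $G$, the direct product $G\times C_2$ (with $G=G\times\{1\}$) is a GI-extension of $G$ if and only if $G$ is generated by elements of order $2$. (3) For $n\ge 2$, the symmetric group $S_n$ is a GI-extension of the alternating group $A_n$.
   Context: Given a group $G'$ with a normal subgroup $G$ of index $2$, $G'$ is called a GI-extension of $G$ if $G'$ is generated by involutions (elements of order exactly $2$) that are not contained in $G$. *)

theory Defs
  imports "HOL-Algebra.Algebra"
begin

definition GI_extension :: "('a, 'b) monoid_scheme \<Rightarrow> 'a set \<Rightarrow> bool" where
  "GI_extension Gp H \<longleftrightarrow>
     group Gp \<and> H \<lhd> Gp \<and> card (rcosets\<^bsub>Gp\<^esub> H) = 2 \<and>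
     carrier Gp = generate Gp {x \<in> carrier Gp - H. group.ord Gp x = 2}"

text \<open>The semidirect product of A with C_2 (C_2 represented by bool, True = generator),
where the generator acts by inversion: (a,s)(b,t) = (a * s(b), s xor t).\<close>
definition inv_sdp :: "('a, 'b) monoid_scheme \<Rightarrow> ('a \<times> bool) monoid" where
  "inv_sdp A = \<lparr> carrier = carrier A \<times> UNIV,
     monoid.mult = (\<lambda>(a, s) (b, t). (a \<otimes>\<^bsub>A\<^esub> (if s then inv\<^bsub>A\<^esub> b else b), s \<noteq> t)),
     monoid.one = (\<one>\<^bsub>A\<^esub>, False) \<rparr>"

definition sdp_base :: "('a, 'b) monoid_scheme \<Rightarrow> ('a \<times> bool) set" where
  "sdp_base A = (\<lambda>a. (a, False)) ` carrier A"

end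

theory Submission
  imports Defs
begin

text \<open>
  If \<open>N\<close> has index two in \<open>G\<close> and \<open>t \<notin> N\<close>, every element of \<open>G\<close> is \<open>n\<close> or \<open>n t\<close> with
  \<open>n \<in> N\<close>. When \<open>N\<close> is abelian and \<open>G\<close> is generated by involutions outside \<open>N\<close>, fix one
  such involution \<open>t\<close>: the elements of \<open>N\<close> inverted by conjugation with \<open>t\<close> form a subgroup
  \<open>I\<close>, and \<open>I \<union> I t\<close> is a subgroup containing every involution \<open>s \<notin> N\<close>, because
  \<open>s t \<in> N\<close> and \<open>t (s t) t = t s = (s t)\<inverse>\<close>. Hence \<open>I = N\<close>, i.e. \<open>t\<close> inverts \<open>N\<close>, and
  \<open>(a, s) \<mapsto> a t\<^sup>s\<close> is an isomorphism \<open>N \<rtimes> C\<^sub>2 \<cong> G\<close>.  Conversely every element \<open>(a, 1)\<close> of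
  \<open>A \<rtimes> C\<^sub>2\<close> is an involution, so these generate.  For \<open>G \<times> C\<^sub>2\<close> the involutions outside
  \<open>G \<times> 0\<close> are the \<open>(g, 1)\<close> with \<open>g\<^sup>2 = 1\<close>; their first coordinates generate \<open>G\<close> exactly
  when the involutions of \<open>G\<close> do.  Finally \<open>S\<^sub>n\<close> is generated by transpositions, which are
  odd involutions.
\<close>

lemma (in group) ord_eq_2_iff:
  assumes "x \<in> carrier G"
  shows "ord x = 2 \<longleftrightarrow> x \<otimes> x = \<one> \<and> x \<noteq> \<one>"
proof -
  have "ord x dvd 2 \<longleftrightarrow> x \<otimes> x = \<one>"
    using pow_eq_id[OF assms, of 2] assms by (simp add: numeral_2_eq_2)
  moreover have "ord x = 2 \<longleftrightarrow> ord x dvd 2 \<and> ord x \<noteq> 1"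
    using two_is_prime_nat by (auto simp: prime_nat_iff)
  ultimately show ?thesis
    using ord_eq_1[OF assms] by blast
qed

lemma (in group) generate_insert_one:
  assumes "S \<subseteq> carrier G"
  shows "generate G (insert \<one> S) = generate G S"
proof
  show "generate G (insert \<one> S) \<subseteq> generate G S"
    using generate_subgroup_incl[OF _ generate_is_subgroup[OF assms]]
    by (simp add: generate.one generate.incl subsetI)
qed (rule mono_generate, blast)

lemma carrier_integer_mod_group_2: "carrier (integer_mod_group 2) = {0, 1}"
  by (auto simp: carrier_integer_mod_group)

section \<open>Subgroups of index two\<close>

lemma (in group) index_two_proper:
  assumes H: "subgroup H G" and index: "card (rcosets H) = 2"
  shows "\<not> carrier G \<subseteq> H"
proof
  assume "carrier G \<subseteq> H"
  then have "rcosets H \<subseteq> {H}"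
    unfolding RCOSETS_def using coset_join2[OF _ H] by auto
  then have "card (rcosets H) \<le> 1"
    using card_mono[of "{H}"] by fastforce
  then show False using index by simp
qed

lemma (in group) index_two_mult_inv_mem:
  assumes H: "subgroup H G" and index: "card (rcosets H) = 2"
    and x: "x \<in> carrier G - H" and y: "y \<in> carrier G - H"
  shows "x \<otimes> inv y \<in> H"
proof -
  have HG: "H \<subseteq> carrier G" using H subgroup.subset by blast
  have cosets: "{H, H #> x, H #> y} \<subseteq> rcosets H"
    using rcosetsI[OF HG] coset_mult_one[OF HG] x y by (metis DiffD1 empty_subsetI insert_subset one_closed)
  have distinct: "H #> x \<noteq> H" "H #> y \<noteq> H"
    using coset_join1[OF _ _ H] x y by blast+
  have "finite (rcosets H)"
    using index by (metis card.infinite zero_neq_numeral)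
  have "H #> x = H #> y"
  proof (rule ccontr)
    assume "H #> x \<noteq> H #> y"
    with distinct have "card {H, H #> x, H #> y} = 3" by simp
    then show False
      using card_mono[OF \<open>finite (rcosets H)\<close> cosets] index by simp
  qed
  then show ?thesis
    using subgroup.rcos_module_imp[OF H is_group] rcos_self[OF _ H] x y by blast
qed

lemma GI_extension_kernel_iff:
  assumes G: "group G" and h: "h \<in> hom G (integer_mod_group 2)"
    and onto: "h ` carrier G = carrier (integer_mod_group 2)"
  shows "GI_extension G (kernel G (integer_mod_group 2) h) \<longleftrightarrow>
    carrier G = generate G {x \<in> carrier G - kernel G (integer_mod_group 2) h. group.ord G x = 2}"
proof -
  interpret group_hom G "integer_mod_group 2" h
    using G h by (simp add: group_hom_def group_hom_axioms_def)
  have "card (rcosets\<^bsub>G\<^esub> (kernel G (integer_mod_group 2) h)) = 2"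
    using iso_same_card[OF FactGroup_iso[OF onto]]
    by (simp add: FactGroup_def carrier_integer_mod_group)
  then show ?thesis
    unfolding GI_extension_def using G normal_kernel by blast
qed

section \<open>Generalised dihedral groups\<close>

lemma carrier_inv_sdp [simp]: "carrier (inv_sdp A) = carrier A \<times> UNIV"
  by (simp add: inv_sdp_def)

lemma one_inv_sdp [simp]: "\<one>\<^bsub>inv_sdp A\<^esub> = (\<one>\<^bsub>A\<^esub>, False)"
  by (simp add: inv_sdp_def)

lemma mult_inv_sdp [simp]:
  "(a, s) \<otimes>\<^bsub>inv_sdp A\<^esub> (b, t) = (a \<otimes>\<^bsub>A\<^esub> (if s then inv\<^bsub>A\<^esub> b else b), s \<noteq> t)"
  by (simp add: inv_sdp_def)

lemma inv_sdp_group: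
  assumes "comm_group A"
  shows "group (inv_sdp A)"
proof -
  interpret A: comm_group A by fact
  show ?thesis
  proof (rule groupI)
    fix x y z assume "x \<in> carrier (inv_sdp A)" "y \<in> carrier (inv_sdp A)" "z \<in> carrier (inv_sdp A)"
    then show "x \<otimes>\<^bsub>inv_sdp A\<^esub> y \<otimes>\<^bsub>inv_sdp A\<^esub> z = x \<otimes>\<^bsub>inv_sdp A\<^esub> (y \<otimes>\<^bsub>inv_sdp A\<^esub> z)"
      by (cases x, cases y, cases z) (auto simp: A.m_assoc A.inv_mult)
  next
    fix x assume "x \<in> carrier (inv_sdp A)"
    then obtain a s where x: "x = (a, s)" "a \<in> carrier A" by auto
    show "\<exists>y \<in> carrier (inv_sdp A). y \<otimes>\<^bsub>inv_sdp A\<^esub> x = \<one>\<^bsub>inv_sdp A\<^esub>"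
      by (rule bexI[of _ "(if s then a else inv\<^bsub>A\<^esub> a, s)"]) (use x in auto)
  qed auto
qed

theorem inv_sdp_GI_extension:
  assumes "comm_group A"
  shows "GI_extension (inv_sdp A) (sdp_base A)"
proof -
  interpret A: comm_group A by fact
  let ?P = "inv_sdp A"
  let ?T = "{x \<in> carrier ?P - sdp_base A. group.ord ?P x = 2}"
  let ?q = "\<lambda>x::'a \<times> bool. if snd x then 1 else 0 :: int"
  have P: "group ?P" by (rule inv_sdp_group[OF assms])
  have q: "?q \<in> hom ?P (integer_mod_group 2)"
    by (auto simp: hom_def carrier_integer_mod_group_2)
  have q_onto: "?q ` carrier ?P = carrier (integer_mod_group 2)"
    by (force simp: carrier_integer_mod_group_2 image_iff)
  have kernel: "kernel ?P (integer_mod_group 2) ?q = sdp_base A"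
    by (auto simp: kernel_def sdp_base_def)
  \<comment> \<open>Every element outside the base is an involution.\<close>
  have odd: "(a, True) \<in> generate ?P ?T" if "a \<in> carrier A" for a
    using that group.ord_eq_2_iff[OF P, of "(a, True)"]
    by (intro generate.incl) (auto simp: sdp_base_def)
  have "carrier ?P \<subseteq> generate ?P ?T"
  proof
    fix x assume "x \<in> carrier ?P"
    then obtain a s where x: "x = (a, s)" "a \<in> carrier A" by auto
    show "x \<in> generate ?P ?T"
    proof (cases s)
      case False
      have "(a, True) \<otimes>\<^bsub>?P\<^esub> (\<one>\<^bsub>A\<^esub>, True) \<in> generate ?P ?T"
        using generate.eng[OF odd[OF x(2)] odd[OF A.one_closed]] by simp
      then show ?thesis using x False by simp
    qed (use odd x in simp)
  qed
  then have "carrier ?P = generate ?P ?T"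
    using group.generate_incl[OF P, of ?T] by blast
  then show ?thesis
    using GI_extension_kernel_iff[OF P q q_onto] unfolding kernel by blast
qed

definition inv_sdp_lift :: "('c, 'd) monoid_scheme \<Rightarrow> ('a \<Rightarrow> 'c) \<Rightarrow> 'c \<Rightarrow> 'a \<times> bool \<Rightarrow> 'c" where
  "inv_sdp_lift G h t = (\<lambda>(a, s). h a \<otimes>\<^bsub>G\<^esub> (if s then t else \<one>\<^bsub>G\<^esub>))"

lemma inv_sdp_lift_hom:
  assumes G: "group G" and A: "group A" and h: "h \<in> hom A G"
    and t: "t \<in> carrier G" "t \<otimes>\<^bsub>G\<^esub> t = \<one>\<^bsub>G\<^esub>"
    and inverts: "\<And>a. a \<in> carrier A \<Longrightarrow> t \<otimes>\<^bsub>G\<^esub> h a \<otimes>\<^bsub>G\<^esub> t = inv\<^bsub>G\<^esub> (h a)"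
  shows "inv_sdp_lift G h t \<in> hom (inv_sdp A) G"
proof -
  interpret G: group G by fact
  interpret h: group_hom A G h
    using A G h by (simp add: group_hom_def group_hom_axioms_def)
  define \<tau> where "\<tau> s = (if s then t else \<one>\<^bsub>G\<^esub>)" for s
  have \<tau>_closed: "\<tau> s \<in> carrier G" for s
    using t by (simp add: \<tau>_def)
  have \<tau>_mult: "\<tau> s \<otimes>\<^bsub>G\<^esub> \<tau> r = \<tau> (s \<noteq> r)" for s r
    using t by (simp add: \<tau>_def)
  have \<tau>_cancel: "\<tau> s \<otimes>\<^bsub>G\<^esub> (\<tau> s \<otimes>\<^bsub>G\<^esub> x) = x" if "x \<in> carrier G" for s x
    using that \<tau>_closed \<tau>_mult[of s s] by (simp add: G.m_assoc[symmetric] \<tau>_def)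
  have \<tau>_conj: "\<tau> s \<otimes>\<^bsub>G\<^esub> h b \<otimes>\<^bsub>G\<^esub> \<tau> s = h (if s then inv\<^bsub>A\<^esub> b else b)"
    if "b \<in> carrier A" for s b
    using that inverts by (simp add: \<tau>_def)
  have "h a \<otimes>\<^bsub>G\<^esub> \<tau> s \<otimes>\<^bsub>G\<^esub> (h b \<otimes>\<^bsub>G\<^esub> \<tau> r)
      = h (a \<otimes>\<^bsub>A\<^esub> (if s then inv\<^bsub>A\<^esub> b else b)) \<otimes>\<^bsub>G\<^esub> \<tau> (s \<noteq> r)"
    if "a \<in> carrier A" "b \<in> carrier A" for a b s r
  proof -
    have "h a \<otimes>\<^bsub>G\<^esub> \<tau> s \<otimes>\<^bsub>G\<^esub> (h b \<otimes>\<^bsub>G\<^esub> \<tau> r)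
        = h a \<otimes>\<^bsub>G\<^esub> (\<tau> s \<otimes>\<^bsub>G\<^esub> h b \<otimes>\<^bsub>G\<^esub> \<tau> s) \<otimes>\<^bsub>G\<^esub> (\<tau> s \<otimes>\<^bsub>G\<^esub> \<tau> r)"
      using that \<tau>_closed by (simp add: G.m_assoc \<tau>_cancel)
    also have "\<dots> = h (a \<otimes>\<^bsub>A\<^esub> (if s then inv\<^bsub>A\<^esub> b else b)) \<otimes>\<^bsub>G\<^esub> \<tau> (s \<noteq> r)"
      using that by (simp add: \<tau>_conj \<tau>_mult)
    finally show ?thesis .
  qed
  then show ?thesis
    using \<tau>_closed by (auto simp: hom_def inv_sdp_lift_def \<tau>_def)
qed

lemma (in group) inverted_elements_subgroup:
  assumes N: "subgroup N G" and comm: "\<And>x y. x \<in> N \<Longrightarrow> y \<in> N \<Longrightarrow> x \<otimes> y = y \<otimes> x"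
    and t: "t \<in> carrier G" "t \<otimes> t = \<one>"
  shows "subgroup {n \<in> N. t \<otimes> n \<otimes> t = inv n} G"
proof -
  interpret N: subgroup N G by fact
  have t_inv: "inv t = t"
    using inv_equality t by blast
  have t_cancel: "t \<otimes> (t \<otimes> x) = x" if "x \<in> carrier G" for x
    using that t by (simp add: m_assoc[symmetric])
  show ?thesis
  proof
    fix a b assume "a \<in> {n \<in> N. t \<otimes> n \<otimes> t = inv n}" "b \<in> {n \<in> N. t \<otimes> n \<otimes> t = inv n}"
    then have a: "a \<in> N" "t \<otimes> a \<otimes> t = inv a" and b: "b \<in> N" "t \<otimes> b \<otimes> t = inv b"
      by blast+
    have "t \<otimes> (a \<otimes> b) \<otimes> t = (t \<otimes> a \<otimes> t) \<otimes> (t \<otimes> b \<otimes> t)"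
      using a(1) b(1) t by (simp add: m_assoc t_cancel)
    also have "\<dots> = inv (b \<otimes> a)"
      using a b by (simp add: inv_mult_group)
    finally show "a \<otimes> b \<in> {n \<in> N. t \<otimes> n \<otimes> t = inv n}"
      using a b comm by auto
  next
    fix a assume "a \<in> {n \<in> N. t \<otimes> n \<otimes> t = inv n}"
    then have a: "a \<in> N" "t \<otimes> a \<otimes> t = inv a"
      by blast+
    have "t \<otimes> inv a \<otimes> t = inv (t \<otimes> a \<otimes> t)"
      using a(1) t t_inv by (simp add: inv_mult_group m_assoc)
    then show "inv a \<in> {n \<in> N. t \<otimes> n \<otimes> t = inv n}"
      using a by simp
  qed (use t in auto)
qed

lemma inv_sdp_lift_image_subgroup:
  assumes G: "group G" and I: "subgroup I G"
    and comm: "\<And>x y. x \<in> I \<Longrightarrow> y \<in> I \<Longrightarrow> x \<otimes>\<^bsub>G\<^esub> y = y \<otimes>\<^bsub>G\<^esub> x"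
    and t: "t \<in> carrier G" "t \<otimes>\<^bsub>G\<^esub> t = \<one>\<^bsub>G\<^esub>"
    and inverts: "\<And>n. n \<in> I \<Longrightarrow> t \<otimes>\<^bsub>G\<^esub> n \<otimes>\<^bsub>G\<^esub> t = inv\<^bsub>G\<^esub> n"
  shows "subgroup (inv_sdp_lift G id t ` (I \<times> UNIV)) G"
proof -
  have I_group: "group (G\<lparr>carrier := I\<rparr>)"
    by (rule group.subgroup_imp_group[OF G I])
  then have "comm_group (G\<lparr>carrier := I\<rparr>)"
    using comm by (auto intro: group.group_comm_groupI)
  moreover have "id \<in> hom (G\<lparr>carrier := I\<rparr>) G"
    using subgroup.subset[OF I] by (auto simp: hom_def)
  then have "inv_sdp_lift G id t \<in> hom (inv_sdp (G\<lparr>carrier := I\<rparr>)) G"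
    using t inverts by (intro inv_sdp_lift_hom[OF G I_group]) auto
  ultimately show ?thesis
    using group_hom.img_is_subgroup inv_sdp_group G
    by (fastforce simp: group_hom_def group_hom_axioms_def)
qed

lemma GI_extension_abelian_base_inverted:
  assumes GI: "GI_extension G N"
    and comm: "\<And>x y. x \<in> N \<Longrightarrow> y \<in> N \<Longrightarrow> x \<otimes>\<^bsub>G\<^esub> y = y \<otimes>\<^bsub>G\<^esub> x"
    and t: "t \<in> carrier G - N" "t \<otimes>\<^bsub>G\<^esub> t = \<one>\<^bsub>G\<^esub>"
    and n: "n \<in> N"
  shows "t \<otimes>\<^bsub>G\<^esub> n \<otimes>\<^bsub>G\<^esub> t = inv\<^bsub>G\<^esub> n"
proof -
  let ?T = "{x \<in> carrier G - N. group.ord G x = 2}"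
  have G: "group G" and N: "subgroup N G" and index: "card (rcosets\<^bsub>G\<^esub> N) = 2"
    and gen: "carrier G = generate G ?T"
    using GI normal_imp_subgroup unfolding GI_extension_def by blast+
  interpret G: group G by fact
  interpret N: subgroup N G by fact
  have t_inv: "inv\<^bsub>G\<^esub> t = t"
    using G.inv_equality t by blast
  define I where "I = {n \<in> N. t \<otimes>\<^bsub>G\<^esub> n \<otimes>\<^bsub>G\<^esub> t = inv\<^bsub>G\<^esub> n}"
  have I: "subgroup I G"
    unfolding I_def using G.inverted_elements_subgroup[OF N comm] t by blast
  have "?T \<subseteq> inv_sdp_lift G id t ` (I \<times> UNIV)"
  proof
    fix x assume x: "x \<in> ?T"
    then have "x \<otimes>\<^bsub>G\<^esub> x = \<one>\<^bsub>G\<^esub>"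
      using G.ord_eq_2_iff by blast
    then have x_inv: "inv\<^bsub>G\<^esub> x = x"
      using x by (intro G.inv_equality) auto
    have xt_N: "x \<otimes>\<^bsub>G\<^esub> t \<in> N"
      using G.index_two_mult_inv_mem[OF N index _ t(1), of x] x unfolding t_inv by blast
    have "t \<otimes>\<^bsub>G\<^esub> (x \<otimes>\<^bsub>G\<^esub> t) \<otimes>\<^bsub>G\<^esub> t = t \<otimes>\<^bsub>G\<^esub> x"
      using x t by (simp add: G.m_assoc)
    also have "\<dots> = inv\<^bsub>G\<^esub> (x \<otimes>\<^bsub>G\<^esub> t)"
      using x t t_inv x_inv by (simp add: G.inv_mult_group)
    finally have xt_inverted: "t \<otimes>\<^bsub>G\<^esub> (x \<otimes>\<^bsub>G\<^esub> t) \<otimes>\<^bsub>G\<^esub> t = inv\<^bsub>G\<^esub> (x \<otimes>\<^bsub>G\<^esub> t)" .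
    have "x = inv_sdp_lift G id t (x \<otimes>\<^bsub>G\<^esub> t, True)"
      using x t by (simp add: inv_sdp_lift_def G.m_assoc)
    then show "x \<in> inv_sdp_lift G id t ` (I \<times> UNIV)"
      by (rule image_eqI) (use xt_N xt_inverted in \<open>simp add: I_def\<close>)
  qed
  moreover have "subgroup (inv_sdp_lift G id t ` (I \<times> UNIV)) G"
    by (rule inv_sdp_lift_image_subgroup[OF G I _ DiffD1[OF t(1)] t(2)]) (auto simp: I_def comm)
  ultimately have "generate G ?T \<subseteq> inv_sdp_lift G id t ` (I \<times> UNIV)"
    by (rule G.generate_subgroup_incl)
  then have "carrier G \<subseteq> inv_sdp_lift G id t ` (I \<times> UNIV)"
    by (rule ord_eq_le_trans[OF gen])
  then have "n \<in> inv_sdp_lift G id t ` (I \<times> UNIV)"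
    using N.mem_carrier[OF n] by (rule subsetD)
  then obtain a s where a: "a \<in> I" and n_eq: "n = a \<otimes>\<^bsub>G\<^esub> (if s then t else \<one>\<^bsub>G\<^esub>)"
    unfolding inv_sdp_lift_def by auto
  have "\<not> s"
  proof
    assume s
    then have "t = inv\<^bsub>G\<^esub> a \<otimes>\<^bsub>G\<^esub> n"
      using a t n_eq unfolding I_def by (simp add: G.m_assoc[symmetric])
    moreover have "inv\<^bsub>G\<^esub> a \<otimes>\<^bsub>G\<^esub> n \<in> N"
      using a n unfolding I_def by blast
    ultimately show False
      using t by simp
  qed
  then show ?thesis
    using a n_eq unfolding I_def by simp
qed

lemma inv_sdp_lift_iso:
  assumes G: "group G" and A: "comm_group A" and N: "subgroup N G"
    and index: "card (rcosets\<^bsub>G\<^esub> N) = 2"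
    and h: "h \<in> iso A (G\<lparr>carrier := N\<rparr>)"
    and t: "t \<in> carrier G - N" "t \<otimes>\<^bsub>G\<^esub> t = \<one>\<^bsub>G\<^esub>"
    and inverts: "\<And>n. n \<in> N \<Longrightarrow> t \<otimes>\<^bsub>G\<^esub> n \<otimes>\<^bsub>G\<^esub> t = inv\<^bsub>G\<^esub> n"
  shows "inv_sdp_lift G h t \<in> iso (inv_sdp A) G"
proof -
  interpret G: group G by fact
  interpret A: comm_group A by fact
  interpret N: subgroup N G by fact
  have h_hom: "h \<in> hom A G" and h_bij: "bij_betw h (carrier A) N"
    using h N.subset by (fastforce simp: iso_def hom_def)+
  then have h_into: "h a \<in> N" if "a \<in> carrier A" for a
    using that bij_betwE by blast
  have t_inv: "inv\<^bsub>G\<^esub> t = t"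
    using G.inv_equality t by blast
  interpret \<psi>: group_hom "inv_sdp A" G "inv_sdp_lift G h t"
    using inv_sdp_lift_hom[OF G A.is_group h_hom DiffD1[OF t(1)] t(2)] inverts h_into
      inv_sdp_group[OF A]
    by (simp add: group_hom_def group_hom_axioms_def)
  have onto: "x \<in> inv_sdp_lift G h t ` carrier (inv_sdp A)" if x: "x \<in> carrier G" for x
  proof (cases "x \<in> N")
    case True
    then obtain a where a: "a \<in> carrier A" "x = h a"
      using h_bij unfolding bij_betw_def by blast
    then have "x = inv_sdp_lift G h t (a, False)"
      using x by (simp add: inv_sdp_lift_def)
    then show ?thesis
      by (rule image_eqI) (simp add: a)
  next
    case False
    then have "x \<otimes>\<^bsub>G\<^esub> t \<in> N"
      using G.index_two_mult_inv_mem[OF N index _ t(1)] x t_inv by simp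
    then obtain a where a: "a \<in> carrier A" "x \<otimes>\<^bsub>G\<^esub> t = h a"
      using h_bij unfolding bij_betw_def by blast
    then have "x = inv_sdp_lift G h t (a, True)"
      using x t by (simp add: inv_sdp_lift_def flip: a(2)) (simp add: G.m_assoc)
    then show ?thesis
      by (rule image_eqI) (simp add: a)
  qed
  have kernel: "(a, s) = \<one>\<^bsub>inv_sdp A\<^esub>"
    if a: "a \<in> carrier A" and ker: "inv_sdp_lift G h t (a, s) = \<one>\<^bsub>G\<^esub>" for a s
  proof -
    have "\<not> s"
    proof
      assume s
      then have "h a \<otimes>\<^bsub>G\<^esub> t = \<one>\<^bsub>G\<^esub>"
        using ker by (simp add: inv_sdp_lift_def)
      then have "inv\<^bsub>G\<^esub> t = h a"
        by (rule G.inv_equality[OF _ DiffD1[OF t(1)] N.mem_carrier[OF h_into[OF a]]])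
      then show False
        using h_into[OF a] t t_inv by simp
    qed
    then have "h a = h \<one>\<^bsub>A\<^esub>"
      using ker a N.mem_carrier[OF h_into[OF a]] group_hom.hom_one[of A G h] h_hom A.is_group G
      by (simp add: inv_sdp_lift_def group_hom_def group_hom_axioms_def)
    then show ?thesis
      using h_bij a \<open>\<not> s\<close> by (simp add: bij_betw_def inj_on_def)
  qed
  show ?thesis
    unfolding \<psi>.iso_iff using onto kernel by auto
qed

lemma iso_comm_group_subgroup_commute:
  assumes A: "comm_group A" and h: "h \<in> iso A (G\<lparr>carrier := N\<rparr>)" and xy: "x \<in> N" "y \<in> N"
  shows "x \<otimes>\<^bsub>G\<^esub> y = y \<otimes>\<^bsub>G\<^esub> x"
proof -
  interpret A: comm_group A by fact
  have h_hom: "h \<in> hom A (G\<lparr>carrier := N\<rparr>)"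
    using h by (simp add: iso_def)
  have "x \<in> h ` carrier A" "y \<in> h ` carrier A"
    using h xy by (simp_all add: iso_def bij_betw_def)
  then obtain a b where ab: "a \<in> carrier A" "b \<in> carrier A" and "x = h a" "y = h b"
    by auto
  then show ?thesis
    using hom_mult[OF h_hom ab] hom_mult[OF h_hom ab(2,1)] A.m_comm[OF ab] by simp
qed

theorem inv_sdp_GI_extension_unique:
  assumes A: "comm_group A" and GI: "GI_extension G N" and iso: "A \<cong> G\<lparr>carrier := N\<rparr>"
  shows "\<exists>\<phi> \<in> iso G (inv_sdp A). \<phi> ` N = sdp_base A"
proof -
  let ?T = "{x \<in> carrier G - N. group.ord G x = 2}"
  have G: "group G" and N: "subgroup N G" and index: "card (rcosets\<^bsub>G\<^esub> N) = 2"
    and gen: "carrier G = generate G ?T"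
    using GI normal_imp_subgroup unfolding GI_extension_def by blast+
  interpret G: group G by fact
  interpret N: subgroup N G by fact
  obtain h where h: "h \<in> iso A (G\<lparr>carrier := N\<rparr>)"
    using iso unfolding is_iso_def by blast
  have "?T \<noteq> {}"
  proof
    assume T_empty: "?T = {}"
    have "carrier G = {\<one>\<^bsub>G\<^esub>}"
      using gen unfolding T_empty G.generate_empty .
    then show False
      using G.index_two_proper[OF N index] N.one_closed by simp
  qed
  then obtain t where t: "t \<in> carrier G - N" "t \<otimes>\<^bsub>G\<^esub> t = \<one>\<^bsub>G\<^esub>"
    using G.ord_eq_2_iff by blast
  let ?\<psi> = "inv_sdp_lift G h t"
  have "t \<otimes>\<^bsub>G\<^esub> n \<otimes>\<^bsub>G\<^esub> t = inv\<^bsub>G\<^esub> n" if "n \<in> N" for n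
    using GI_extension_abelian_base_inverted[OF GI iso_comm_group_subgroup_commute[OF A h] t that] .
  then have \<psi>: "?\<psi> \<in> iso (inv_sdp A) G"
    by (rule inv_sdp_lift_iso[OF G A N index h t])
  have h_bij: "bij_betw h (carrier A) N"
    using h by (simp add: iso_def)
  have "?\<psi> ` sdp_base A = (\<lambda>a. h a \<otimes>\<^bsub>G\<^esub> \<one>\<^bsub>G\<^esub>) ` carrier A"
    by (simp add: inv_sdp_lift_def sdp_base_def image_image)
  also have "\<dots> = h ` carrier A"
    using h_bij N.mem_carrier by (intro image_cong) (auto simp: bij_betw_def)
  also have "\<dots> = N"
    using h_bij by (simp add: bij_betw_def)
  finally have \<psi>_base: "?\<psi> ` sdp_base A = N" .
  have "inj_on ?\<psi> (carrier (inv_sdp A))"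
    using \<psi> by (simp add: iso_def bij_betw_def)
  then have "inv_into (carrier (inv_sdp A)) ?\<psi> ` N = sdp_base A"
    unfolding \<psi>_base[symmetric] by (rule inv_into_image_cancel) (auto simp: sdp_base_def)
  moreover have "inv_into (carrier (inv_sdp A)) ?\<psi> \<in> iso G (inv_sdp A)"
    using group.iso_set_sym[OF inv_sdp_group[OF A] \<psi>] .
  ultimately show ?thesis
    by blast
qed

section \<open>Direct products with the cyclic group of order two\<close>

lemma DirProd_integer_mod_group_2_odd_involutions:
  assumes "group G"
  shows "{x \<in> carrier (G \<times>\<times> integer_mod_group 2) - carrier G \<times> {0}.
            group.ord (G \<times>\<times> integer_mod_group 2) x = 2}
       = (\<lambda>g. (g, 1)) ` {g \<in> carrier G. g \<otimes>\<^bsub>G\<^esub> g = \<one>\<^bsub>G\<^esub>}"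
  using group.ord_eq_2_iff[OF DirProd_group[OF assms group_integer_mod_group]]
  by (auto simp: carrier_integer_mod_group_2)

lemma DirProd_integer_mod_group_2_subgroup_eqI:
  assumes G: "group G" and H: "subgroup H (G \<times>\<times> integer_mod_group 2)"
    and gen: "(\<one>\<^bsub>G\<^esub>, 1) \<in> H" and onto: "fst ` H = carrier G"
  shows "H = carrier (G \<times>\<times> integer_mod_group 2)"
proof
  show "H \<subseteq> carrier (G \<times>\<times> integer_mod_group 2)"
    using H by (rule subgroup.subset)
  show "carrier (G \<times>\<times> integer_mod_group 2) \<subseteq> H"
  proof
    fix x assume "x \<in> carrier (G \<times>\<times> integer_mod_group 2)"
    then obtain g k where x: "x = (g, k)" "g \<in> carrier G" "k \<in> {0, 1}"
      by (auto simp: carrier_integer_mod_group_2)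
    then obtain k' where h: "(g, k') \<in> H"
      using onto by force
    then have "k' \<in> {0, 1}"
      using subgroup.subset[OF H] by (auto simp: carrier_integer_mod_group_2)
    moreover have "(g, k') \<otimes>\<^bsub>G \<times>\<times> integer_mod_group 2\<^esub> (\<one>\<^bsub>G\<^esub>, 1) \<in> H"
      using subgroup.m_closed[OF H h gen] .
    ultimately show "x \<in> H"
      using h x by (auto simp: monoid.r_one[OF group.is_monoid[OF G]])
  qed
qed

theorem DirProd_integer_mod_group_2_GI_extension_iff:
  assumes G: "group G"
  shows "GI_extension (G \<times>\<times> integer_mod_group 2) (carrier G \<times> {0})
    \<longleftrightarrow> carrier G = generate G {x \<in> carrier G. group.ord G x = 2}"
proof -
  interpret G: group G by fact
  let ?P = "G \<times>\<times> integer_mod_group 2"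
  let ?T = "{x \<in> carrier ?P - carrier G \<times> {0}. group.ord ?P x = 2}"
  have P: "group ?P" by (rule DirProd_group[OF G group_integer_mod_group])
  interpret fst: group_hom ?P G fst
    using P G by (auto simp: group_hom_def group_hom_axioms_def hom_def mult_DirProd')
  have snd: "snd \<in> hom ?P (integer_mod_group 2)"
    by (auto simp: hom_def mult_DirProd')
  have snd_onto: "snd ` carrier ?P = carrier (integer_mod_group 2)"
    using G.one_closed by force
  have kernel: "kernel ?P (integer_mod_group 2) snd = carrier G \<times> {0}"
    by (auto simp: kernel_def)
  have T: "?T = (\<lambda>g. (g, 1)) ` {g \<in> carrier G. g \<otimes>\<^bsub>G\<^esub> g = \<one>\<^bsub>G\<^esub>}"
    by (rule DirProd_integer_mod_group_2_odd_involutions[OF G])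
  have "fst ` generate ?P ?T = generate G (fst ` ?T)"
    by (rule fst.generate_img[symmetric]) blast
  also have "fst ` ?T = insert \<one>\<^bsub>G\<^esub> {x \<in> carrier G. G.ord x = 2}"
    unfolding T using G.ord_eq_2_iff by (auto simp: image_image)
  also have "generate G \<dots> = generate G {x \<in> carrier G. G.ord x = 2}"
    by (rule G.generate_insert_one) blast
  finally have fst_gen: "fst ` generate ?P ?T = generate G {x \<in> carrier G. G.ord x = 2}" .
  have "carrier ?P = generate ?P ?T \<longleftrightarrow> carrier G = generate G {x \<in> carrier G. G.ord x = 2}"
  proof
    assume "carrier ?P = generate ?P ?T"
    then show "carrier G = generate G {x \<in> carrier G. G.ord x = 2}"
      using fst_gen by (simp add: carrier_integer_mod_group_2)
  next
    assume "carrier G = generate G {x \<in> carrier G. G.ord x = 2}"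
    then have "fst ` generate ?P ?T = carrier G"
      using fst_gen by simp
    moreover have "(\<one>\<^bsub>G\<^esub>, 1) \<in> generate ?P ?T"
      unfolding T by (rule generate.incl) simp
    ultimately show "carrier ?P = generate ?P ?T"
      using DirProd_integer_mod_group_2_subgroup_eqI[OF G group.generate_is_subgroup[OF P]]
      by (metis (no_types, lifting) Diff_subset mem_Collect_eq subsetI subset_trans)
  qed
  then show ?thesis
    using GI_extension_kernel_iff[OF P snd snd_onto] unfolding kernel by blast
qed

section \<open>Symmetric groups\<close>

lemma transpose_in_odd_involutions:
  assumes "a \<in> {1..n}" "b \<in> {1..n}" "a \<noteq> b"
  shows "transpose a b \<in> {x \<in> carrier (sym_group n) - carrier (alt_group n). group.ord (sym_group n) x = 2}"
proof -
  have "transpose a b \<in> carrier (sym_group n)"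
    using assms by (simp add: sym_group_carrier permutes_swap_id)
  moreover have "transpose a b \<noteq> id"
    using assms(3) by (metis id_apply transpose_apply_first)
  ultimately show ?thesis
    using group.ord_eq_2_iff[OF sym_group_is_group] assms(3)
    by (simp add: alt_group_carrier evenperm_swap sym_group_mult sym_group_one)
qed

theorem sym_group_GI_extension:
  assumes "n \<ge> 2"
  shows "GI_extension (sym_group n) (carrier (alt_group n))"
proof -
  let ?T = "{x \<in> carrier (sym_group n) - carrier (alt_group n). group.ord (sym_group n) x = 2}"
  have index: "card (rcosets\<^bsub>sym_group n\<^esub> (carrier (alt_group n))) = 2"
    using iso_same_card[OF sign_iso[OF assms]] unfolding FactGroup_def sign_img_def by auto
  have normal: "carrier (alt_group n) \<lhd> sym_group n"
    unfolding alt_group_is_sign_kernel by (rule group_hom.normal_kernel[OF sign_group_hom])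
  have "p \<in> generate (sym_group n) ?T" if "p permutes {1..n}" for p
    using that finite_atLeastAtMost
  proof (induction p rule: permutes_induct)
    case id
    show ?case using generate.one[of "sym_group n" ?T] unfolding sym_group_one .
  next
    case (swap a b p)
    have "transpose a b \<otimes>\<^bsub>sym_group n\<^esub> p \<in> generate (sym_group n) ?T"
      using generate.eng[OF generate.incl[OF transpose_in_odd_involutions] swap.IH] swap.hyps
      by blast
    then show ?case unfolding sym_group_mult .
  qed
  moreover have "generate (sym_group n) ?T \<subseteq> carrier (sym_group n)"
    by (rule group.generate_incl[OF sym_group_is_group]) blast
  ultimately have "carrier (sym_group n) = generate (sym_group n) ?T"
    by (auto simp: sym_group_carrier)
  then show ?thesis
    unfolding GI_extension_def using sym_group_is_group normal index by blast
qed

theorem mainTheorem2: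
  shows
  "(\<forall>(A :: ('a, 'b) monoid_scheme). comm_group A \<and> finite (carrier A) \<longrightarrow>
       GI_extension (inv_sdp A) (sdp_base A) \<and>
       (\<forall>(Gp :: ('c, 'd) monoid_scheme) N.
          GI_extension Gp N \<and> A \<cong> Gp\<lparr>carrier := N\<rparr> \<longrightarrow>
          (\<exists>\<phi> \<in> iso Gp (inv_sdp A). \<phi> ` N = sdp_base A)))
   \<and> (\<forall>(G :: ('e, 'f) monoid_scheme). group G \<and> finite (carrier G) \<longrightarrow>
       (GI_extension (G \<times>\<times> integer_mod_group 2) (carrier G \<times> {0})
        \<longleftrightarrow> carrier G = generate G {x \<in> carrier G. group.ord G x = 2}))
   \<and> (\<forall>n::nat. n \<ge> 2 \<longrightarrow> GI_extension (sym_group n) (carrier (alt_group n)))"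
proof (intro conjI allI impI)
  fix A :: "('a, 'b) monoid_scheme"
  assume "comm_group A \<and> finite (carrier A)"
  then show "GI_extension (inv_sdp A) (sdp_base A)"
    by (simp add: inv_sdp_GI_extension)
next
  fix A :: "('a, 'b) monoid_scheme" and Gp :: "('c, 'd) monoid_scheme" and N
  assume "comm_group A \<and> finite (carrier A)" and "GI_extension Gp N \<and> A \<cong> Gp\<lparr>carrier := N\<rparr>"
  then show "\<exists>\<phi> \<in> iso Gp (inv_sdp A). \<phi> ` N = sdp_base A"
    by (simp add: inv_sdp_GI_extension_unique)
next
  fix G :: "('e, 'f) monoid_scheme"
  assume "group G \<and> finite (carrier G)"
  then show "GI_extension (G \<times>\<times> integer_mod_group 2) (carrier G \<times> {0})
      \<longleftrightarrow> carrier G = generate G {x \<in> carrier G. group.ord G x = 2}"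
    by (simp add: DirProd_integer_mod_group_2_GI_extension_iff)
next
  fix n :: nat
  assume "n \<ge> 2"
  then show "GI_extension (sym_group n) (carrier (alt_group n))"
    by (rule sym_group_GI_extension)
qed

end
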